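(* Let $X$ be a complex manifold and $E\to X$ a holomorphic vector bundle of rank $r$ with a qas metric $h$. For every $x_0\in X$ there are a neighborhood $U$ of $x_0$ with a trivialization $E|_U\simeq U\times\mathbb C^r_\alpha$, holomorphic $r$-tuples $f_1(x),\dots,f_m(x)$ on $U$, and a constant $C>0$ such that $$\frac1C|\alpha|_{h(x)}\le\sum_{k=1}^m|f_k(x)\cdot\alpha|\le C|\alpha|_{h(x)}\quad\text{for all }(x,\alpha)\in U\times\mathbb C^r.$$
   Context: A function $u$ with values in $[-\infty,\infty)$ is qas if it is quasi-plurisubharmonic ($\equiv-\infty$ allowed) and locally $u=\log|f|^2+b$ with $f$ a finite tuple of holomorphic functions and $b$ bounded. A singular Hermitian metric $h$ on $E$ is a function $\alpha\mapsto|\alpha|_h^2$ on the total space of $E$ restricting to a possibly degenerate positive semidefinite Hermitian form $h(x)$ on each fiber; it is qas if $\log|\alpha|^2_h$ is a qas function on the total space of $E$. Here $f_k(x)\cdot\alpha=\sum_j f_{k,j}(x)\alpha_j$. *)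

theory Defs
  imports "HOL-Analysis.Analysis" "HOL-Probability.Probability"
begin

definition holo_on :: "(complex ^ 'm) set \<Rightarrow> (complex ^ 'm \<Rightarrow> complex) \<Rightarrow> bool" where
  "holo_on V f \<longleftrightarrow> (\<forall>z\<in>V. \<exists>L. (f has_derivative L) (at z) \<and> (\<forall>c v. L (c *s v) = c * L v))"

text \<open>Real C-infinity functions (coinductive: differentiable, with all directional
  derivatives again of the same kind).\<close>
definition smooth_on :: "(complex ^ 'm) set \<Rightarrow> (complex ^ 'm \<Rightarrow> real) \<Rightarrow> bool" where
  "smooth_on V g \<longleftrightarrow> (\<exists>S. g \<in> S \<and>
     (\<forall>\<phi>\<in>S. \<forall>v. \<exists>\<psi>\<in>S. \<forall>z\<in>V. \<exists>L. (\<phi> has_derivative L) (at z) \<and> L v = \<psi> z))"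

definition usc_on :: "(complex ^ 'm) set \<Rightarrow> (complex ^ 'm \<Rightarrow> ereal) \<Rightarrow> bool" where
  "usc_on W u \<longleftrightarrow> (\<forall>z\<in>W. \<forall>c. u z < c \<longrightarrow> (\<forall>\<^sub>F w in at z. u w < c))"

text \<open>Mean value of an ereal function over [0, 2 pi] (well defined in [-inf,inf) for
  functions bounded above).\<close>
definition circle_mean :: "(real \<Rightarrow> ereal) \<Rightarrow> ereal" where
  "circle_mean g =
     (enn2ereal (\<integral>\<^sup>+ \<theta>. e2ennreal (max 0 (g \<theta>)) * indicator {0..2*pi} \<theta> \<partial>lborel)
      - enn2ereal (\<integral>\<^sup>+ \<theta>. e2ennreal (max 0 (- g \<theta>)) * indicator {0..2*pi} \<theta> \<partial>lborel))
     * ereal (1 / (2*pi))"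

text \<open>Plurisubharmonic (identically -infinity allowed): upper semicontinuous, never +infinity,
  sub-mean-value property on every closed complex disc contained in W.\<close>
definition psh_on :: "(complex ^ 'm) set \<Rightarrow> (complex ^ 'm \<Rightarrow> ereal) \<Rightarrow> bool" where
  "psh_on W u \<longleftrightarrow> (\<forall>z\<in>W. u z \<noteq> \<infinity>) \<and> usc_on W u \<and>
     (\<forall>a v. (\<forall>\<zeta>. cmod \<zeta> \<le> 1 \<longrightarrow> a + \<zeta> *s v \<in> W) \<longrightarrow>
        u a \<le> circle_mean (\<lambda>\<theta>. u (a + cis \<theta> *s v)))"

definition qpsh_on :: "(complex ^ 'm) set \<Rightarrow> (complex ^ 'm \<Rightarrow> ereal) \<Rightarrow> bool" where
  "qpsh_on W u \<longleftrightarrow> (\<forall>p\<in>W. \<exists>V g. open V \<and> p \<in> V \<and> V \<subseteq> W \<and> smooth_on V g \<and>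
      psh_on V (\<lambda>z. u z - ereal (g z)))"

definition elog :: "real \<Rightarrow> ereal" where
  "elog t = (if t = 0 then - \<infinity> else ereal (ln t))"

definition qas_on :: "(complex ^ 'm) set \<Rightarrow> (complex ^ 'm \<Rightarrow> ereal) \<Rightarrow> bool" where
  "qas_on W u \<longleftrightarrow> qpsh_on W u \<and>
    (\<forall>p\<in>W. \<exists>V fs b. open V \<and> p \<in> V \<and> V \<subseteq> W \<and>
        (\<forall>f\<in>set fs. holo_on V f) \<and> bounded (b ` V) \<and>
        (\<forall>z\<in>V. u z = elog (\<Sum>f\<leftarrow>fs. (cmod (f z))\<^sup>2) + ereal (b z)))"

text \<open>Total space of the trivial bundle: coordinates indexed by 'n + 'r.\<close>
definition joinv :: "complex ^ 'n::finite \<Rightarrow> complex ^ 'r::finite \<Rightarrow> complex ^ ('n + 'r)" where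
  "joinv x a = (\<chi> i. case i of Inl j \<Rightarrow> x $ j | Inr k \<Rightarrow> a $ k)"

definition basept :: "complex ^ ('n::finite + 'r::finite) \<Rightarrow> complex ^ 'n" where
  "basept w = (\<chi> j. w $ Inl j)"

definition fibpt :: "complex ^ ('n::finite + 'r::finite) \<Rightarrow> complex ^ 'r" where
  "fibpt w = (\<chi> k. w $ Inr k)"

definition total_space :: "(complex ^ 'n::finite) set \<Rightarrow> (complex ^ ('n + 'r::finite)) set" where
  "total_space \<Omega> = {w. basept w \<in> \<Omega>}"

text \<open>Hermitian metric given by a matrix H(x); |alpha|^2_{h(x)} = sum conj(alpha_j) H_jk alpha_k.\<close>
definition herm_psd :: "complex ^ 'r ^ 'r \<Rightarrow> bool" where
  "herm_psd A \<longleftrightarrow> (\<forall>j k. A $ j $ k = cnj (A $ k $ j)) \<and>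
     (\<forall>a. 0 \<le> Re (\<Sum>j\<in>UNIV. \<Sum>k\<in>UNIV. cnj (a $ j) * A $ j $ k * a $ k))"

definition hnorm2 :: "complex ^ 'r ^ 'r \<Rightarrow> complex ^ 'r \<Rightarrow> real" where
  "hnorm2 A a = Re (\<Sum>j\<in>UNIV. \<Sum>k\<in>UNIV. cnj (a $ j) * A $ j $ k * a $ k)"

definition cdot :: "complex ^ 'r \<Rightarrow> complex ^ 'r \<Rightarrow> complex" where
  "cdot f a = (\<Sum>j\<in>UNIV. f $ j * a $ j)"

end

(*
  Near the point (x0, 0) of the zero section, the qas hypothesis writes the fiber norm as
  |alpha|^2_h(x) = e^(b(x, alpha)) * sum_k |F_k(x, alpha)|^2 with F_k holomorphic and b bounded.
  Since |t alpha|^2_h = |t|^2 |alpha|^2_h, letting t -> 0 shows that the F_k vanish on the zero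
  section and that |alpha|^2_h(x) is comparable, up to the factor e^(sup |b|), with
  sum_k |f_k(x) . alpha|^2, where f_k(x) . alpha is the derivative of F_k at (x, 0) in the fiber
  direction alpha.  Passing from the l2-sum to the l1-sum costs a factor sqrt m, and the
  trivialization can be taken to be the identity.  The f_k depend holomorphically on x because a
  directional derivative of a holomorphic function is holomorphic; this is proved from Cauchy's
  formula on complex lines together with locally uniform quadratic Taylor bounds.
*)

theory Submission
  imports Defs "HOL-Complex_Analysis.Cauchy_Integral_Formula"
begin

section \<open>Holomorphic functions of several variables\<close>

abbreviation hderiv :: "(complex ^ 'm \<Rightarrow> complex) \<Rightarrow> complex ^ 'm \<Rightarrow> complex ^ 'm \<Rightarrow> complex"
  where "hderiv F z \<equiv> frechet_derivative F (at z)"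

lemma of_real_vector_smult: "(of_real a :: complex) *s (v :: complex ^ 'm) = a *\<^sub>R v"
  by (simp add: vec_eq_iff) (simp add: scaleR_conv_of_real)

lemma norm_vector_smult: "norm (c *s (v :: complex ^ 'm)) = cmod c * norm v"
  unfolding norm_vec_def by (simp add: norm_mult L2_set_right_distrib)

lemma bounded_linear_vector_smult_left: "bounded_linear (\<lambda>s :: complex. s *s (u :: complex ^ 'm))"
proof -
  have "linear (\<lambda>s :: complex. s *s u)"
    by (rule linearI) (simp_all add: vec_eq_iff)
  then show ?thesis using linear_conv_bounded_linear by blast
qed

lemma has_derivative_quadratic_remainder:
  fixes f :: "'a::real_normed_vector \<Rightarrow> 'b::real_normed_vector"
  assumes L: "bounded_linear L" and \<delta>: "\<delta> > 0"
    and rem: "\<And>y. norm y < \<delta> \<Longrightarrow> norm (f (x + y) - f x - L y) \<le> C * (norm y)\<^sup>2"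
  shows "(f has_derivative L) (at x)"
  unfolding has_derivative_at
proof (intro conjI L)
  have "\<forall>\<^sub>F y in at 0. norm (norm (f (x + y) - f x - L y) / norm y) \<le> C * norm y"
    using eventually_at_ball'[OF \<delta>]
  proof (rule eventually_mono)
    fix y :: 'a assume y: "y \<in> ball 0 \<delta> \<and> y \<noteq> 0 \<and> y \<in> UNIV"
    then have "norm (f (x + y) - f x - L y) \<le> (C * norm y) * norm y"
      using rem[of y] by (simp add: power2_eq_square)
    then show "norm (norm (f (x + y) - f x - L y) / norm y) \<le> C * norm y"
      using y by (simp add: divide_le_eq)
  qed
  moreover have "((\<lambda>y. C * norm y) \<longlongrightarrow> 0) (at 0)"
    by (rule tendsto_mult_right_zero[OF tendsto_norm_zero[OF tendsto_ident_at]])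
  ultimately show "(\<lambda>y. norm (f (x + y) - f x - L y) / norm y) \<midarrow>0\<rightarrow> 0"
    by (rule Lim_null_comparison)
qed

lemma holo_onD:
  assumes "holo_on V F" "z \<in> V"
  shows "(F has_derivative hderiv F z) (at z)"
    and "hderiv F z (c *s v) = c * hderiv F z v"
proof -
  obtain L where L: "(F has_derivative L) (at z)" "\<And>c v. L (c *s v) = c * L v"
    using assms unfolding holo_on_def by blast
  moreover have "L = hderiv F z" using L(1) by (rule frechet_derivative_at)
  ultimately show "(F has_derivative hderiv F z) (at z)" "hderiv F z (c *s v) = c * hderiv F z v"
    by auto
qed

lemma holo_on_linear_deriv:
  assumes "holo_on V F" "z \<in> V"
  shows "linear (hderiv F z)"
  using has_derivative_linear[OF holo_onD(1)[OF assms]] .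

lemma holo_on_imp_continuous_on:
  assumes "holo_on V F"
  shows "continuous_on V F"
  using holo_onD(1)[OF assms] has_derivative_continuous
  by (blast intro: continuous_at_imp_continuous_on)

lemma holo_on_has_field_derivative_line:
  assumes "holo_on V F" "w + s *s u \<in> V"
  shows "((\<lambda>s. F (w + s *s u)) has_field_derivative hderiv F (w + s *s u) u) (at s)"
proof -
  have "((\<lambda>s. w + s *s u) has_derivative (\<lambda>h. h *s u)) (at s)"
    using has_derivative_add[OF has_derivative_const
        bounded_linear_imp_has_derivative[OF bounded_linear_vector_smult_left]]
    by simp
  from diff_chain_at[OF this holo_onD(1)[OF assms]]
  have "((\<lambda>s. F (w + s *s u)) has_derivative (\<lambda>h. h * hderiv F (w + s *s u) u)) (at s)"
    using holo_onD(2)[OF assms] by (simp add: o_def)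
  then show ?thesis by (simp add: has_field_derivative_def mult_commute_abs)
qed

lemma holomorphic_on_line:
  assumes "holo_on V F" "\<And>s. s \<in> S \<Longrightarrow> w + s *s u \<in> V"
  shows "(\<lambda>s. F (w + s *s u)) holomorphic_on S"
  unfolding holomorphic_on_def field_differentiable_def
  using holo_on_has_field_derivative_line[OF assms(1) assms(2)] has_field_derivative_at_within
  by blast

lemma holo_on_const: "holo_on V (\<lambda>_. c)"
  unfolding holo_on_def by (auto intro!: exI[of _ "\<lambda>_. 0"] has_derivative_const)

lemma holo_on_compose_clinear:
  fixes P :: "complex ^ 'n \<Rightarrow> complex ^ 'm"
  assumes hol: "holo_on V \<psi>" and P: "bounded_linear P" "\<And>c x. P (c *s x) = c *s P x"
  shows "holo_on {x. P x \<in> V} (\<lambda>x. \<psi> (P x))"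
  unfolding holo_on_def
proof
  fix x assume x: "x \<in> {x. P x \<in> V}"
  then have "((\<lambda>x. \<psi> (P x)) has_derivative (\<lambda>h. hderiv \<psi> (P x) (P h))) (at x)"
    using diff_chain_at[OF bounded_linear_imp_has_derivative[OF P(1)] holo_onD(1)[OF hol]]
    by (simp add: o_def)
  moreover have "hderiv \<psi> (P x) (P (c *s h)) = c * hderiv \<psi> (P x) (P h)" for c h
    using holo_onD(2)[OF hol] x P(2) by simp
  ultimately show "\<exists>L. ((\<lambda>x. \<psi> (P x)) has_derivative L) (at x) \<and> (\<forall>c v. L (c *s v) = c * L v)"
    by blast
qed

lemma holomorphic_quadratic_remainder:
  fixes g :: "complex \<Rightarrow> complex"
  assumes hol: "g holomorphic_on ball 0 (3*d)" and d: "d > 0"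
    and M: "\<And>s. s \<in> ball 0 (3*d) \<Longrightarrow> cmod (g s) \<le> M"
    and s: "cmod s \<le> d"
  shows "cmod (g s - g 0 - deriv g 0 * s) \<le> 2*M/d\<^sup>2 * (cmod s)\<^sup>2"
proof -
  let ?S = "cball (0::complex) d"
  have "cmod ((deriv ^^ 2) g x) \<le> fact 2 * M / d\<^sup>2" if "x \<in> ?S" for x
  proof (rule Cauchy_inequality)
    have sub: "cball x d \<subseteq> ball 0 (3*d)"
    proof
      fix y assume "y \<in> cball x d"
      then have "cmod y \<le> cmod (y - x) + cmod x" "cmod (y - x) \<le> d" "cmod x \<le> d"
        using that norm_triangle_sub[of y x] by (auto simp: dist_norm norm_minus_commute)
      then show "y \<in> ball 0 (3*d)" using d by simp
    qed
    show "g holomorphic_on ball x d"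
      using holomorphic_on_subset[OF hol] sub ball_subset_cball by blast
    show "continuous_on (cball x d) g"
      using holomorphic_on_imp_continuous_on[OF hol] continuous_on_subset sub by blast
    show "cmod (g y) \<le> M" if "cmod (x - y) = d" for y
      using M sub that by (auto simp: dist_norm)
  qed (use d in simp)
  then have bound: "cmod ((deriv ^^ Suc 1) g x) \<le> 2*M/d\<^sup>2" if "x \<in> ?S" for x
    using that by (simp add: numeral_2_eq_2)
  have "cmod ((deriv^^0) g s - (\<Sum>i\<le>1. (deriv^^i) g 0 * (s - 0)^i / fact i))
      \<le> 2*M/d\<^sup>2 * cmod (s - 0)^Suc 1 / fact 1"
  proof (rule complex_Taylor[where S = ?S and f = "\<lambda>i. (deriv ^^ i) g"])
    show "((deriv ^^ i) g has_field_derivative (deriv ^^ Suc i) g x) (at x within ?S)"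
      if "x \<in> ?S" for i x
    proof -
      have "x \<in> ball 0 (3*d)" using that d by auto
      then show ?thesis
        using holomorphic_derivI[OF holomorphic_higher_deriv[OF hol] open_ball, of x i] by simp
    qed
  qed (use s d bound in auto)
  then show ?thesis by (simp add: power2_eq_square algebra_simps atMost_Suc)
qed

lemma holo_on_quadratic_remainder:
  assumes hol: "holo_on V F" and sub: "ball w (3*d) \<subseteq> V" and d: "d > 0"
    and M: "\<And>z. z \<in> ball w (3*d) \<Longrightarrow> cmod (F z) \<le> M"
    and y: "norm y \<le> d"
  shows "cmod (F (w + y) - F w - hderiv F w y) \<le> 2*M/d\<^sup>2 * (norm y)\<^sup>2"
proof (cases "y = 0")
  case True
  have "w \<in> V" using sub d by auto
  then show ?thesis using holo_onD(2)[OF hol, of w 0 0] True by simp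
next
  case False
  define u where "u = (1 / norm y) *\<^sub>R y"
  define g where "g = (\<lambda>s. F (w + s *s u))"
  have nu: "norm u = 1" using False by (simp add: u_def)
  have y_eq: "of_real (norm y) *s u = y" using False by (simp add: of_real_vector_smult u_def)
  have inV: "w + s *s u \<in> V" if "s \<in> ball 0 (3*d)" for s
    using that sub nu by (auto simp: dist_norm norm_vector_smult)
  have "cmod (g (norm y) - g 0 - deriv g 0 * norm y) \<le> 2*M/d\<^sup>2 * (cmod (norm y))\<^sup>2"
  proof (rule holomorphic_quadratic_remainder[OF _ d])
    show "g holomorphic_on ball 0 (3*d)"
      unfolding g_def by (rule holomorphic_on_line[OF hol inV])
    show "cmod (g s) \<le> M" if "s \<in> ball 0 (3*d)" for s
      using M that nu by (auto simp: g_def dist_norm norm_vector_smult)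
  qed (use y in auto)
  moreover have "deriv g 0 = hderiv F w u"
    using DERIV_imp_deriv[OF holo_on_has_field_derivative_line[OF hol inV[of 0]]] d
    by (simp add: g_def)
  moreover have "hderiv F w u * norm y = hderiv F w y"
    using holo_onD(2)[OF hol inV[of 0], of "of_real (norm y)" u] d y_eq by (simp add: mult.commute)
  ultimately show ?thesis using y_eq by (simp add: g_def)
qed

lemma holo_on_quadratic_remainder_locally:
  assumes hol: "holo_on V F" and V: "open V" "z \<in> V"
  obtains r K where "r > 0" "K \<ge> 0" "ball z r \<subseteq> V"
    "\<And>w y. w \<in> ball z r \<Longrightarrow> norm y \<le> r \<Longrightarrow>
       cmod (F (w + y) - F w - hderiv F w y) \<le> K * (norm y)\<^sup>2"
proof -
  obtain R where R: "R > 0" "cball z R \<subseteq> V" using open_contains_cball V by blast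
  obtain M where M: "M \<ge> 0" "\<And>w. w \<in> cball z R \<Longrightarrow> cmod (F w) \<le> M"
    using continuous_on_compact_bound[OF compact_cball
        continuous_on_subset[OF holo_on_imp_continuous_on[OF hol] R(2)]] by blast
  define r where "r = R/4"
  have r: "r > 0" using R by (simp add: r_def)
  have ball_sub: "ball w (3*r) \<subseteq> cball z R" if "w \<in> ball z r" for w
  proof
    fix x assume "x \<in> ball w (3*r)"
    then have "dist z x < R" using that dist_triangle[of z x w] by (simp add: r_def)
    then show "x \<in> cball z R" by simp
  qed
  show thesis
  proof (rule that[of r "2*M/r\<^sup>2"])
    show "ball z r \<subseteq> V" using R r by (auto simp: r_def)
    show "cmod (F (w + y) - F w - hderiv F w y) \<le> 2*M/r\<^sup>2 * (norm y)\<^sup>2"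
      if "w \<in> ball z r" "norm y \<le> r" for w y
    proof (rule holo_on_quadratic_remainder[OF hol _ r _ that(2)])
      show "ball w (3*r) \<subseteq> V" using ball_sub[OF that(1)] R(2) by blast
      show "cmod (F x) \<le> M" if "x \<in> ball w (3*r)" for x
        using ball_sub[OF \<open>w \<in> ball z r\<close>] M(2) that by blast
    qed
  qed (use r M in auto)
qed

lemma holo_on_difference_quotient_error:
  assumes hol: "holo_on V F" and "w \<in> V" "t \<noteq> 0"
    and rem: "cmod (F (w + t *s y) - F w - hderiv F w (t *s y)) \<le> K * (norm (t *s y))\<^sup>2"
  shows "cmod ((F (w + t *s y) - F w) / t - hderiv F w y) \<le> K * cmod t * (norm y)\<^sup>2"
proof -
  have "(F (w + t *s y) - F w) / t - hderiv F w y
      = (F (w + t *s y) - F w - hderiv F w (t *s y)) / t"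
    using holo_onD(2)[OF hol \<open>w \<in> V\<close>, of t y] \<open>t \<noteq> 0\<close> by (simp add: field_simps)
  also have "cmod \<dots> \<le> K * (cmod t * norm y)\<^sup>2 / cmod t"
    using rem \<open>t \<noteq> 0\<close> by (simp add: norm_divide norm_vector_smult divide_right_mono)
  also have "\<dots> = K * cmod t * (norm y)\<^sup>2"
    using \<open>t \<noteq> 0\<close> by (simp add: power2_eq_square)
  finally show ?thesis .
qed

lemma eventually_at_zero_norm_mult_less:
  assumes "e > 0"
  shows "\<forall>\<^sub>F t in at (0::complex). t \<noteq> 0 \<and> cmod t * a < e"
  using eventually_neq_at_within[of 0 0 UNIV] assms
    order_tendstoD(2)[OF tendsto_mult_left_zero[OF tendsto_norm_zero[OF tendsto_ident_at]], of e a]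
  by (intro eventually_conj) auto

lemma holo_on_difference_quotient_uniform_limit:
  assumes hol: "holo_on V F" and r: "r > 0" "ball z r \<subseteq> V"
    and rem: "\<And>w y. w \<in> ball z r \<Longrightarrow> norm y \<le> r \<Longrightarrow>
       cmod (F (w + y) - F w - hderiv F w y) \<le> K * (norm y)\<^sup>2"
  shows "uniform_limit (ball z (r/2)) (\<lambda>t w. (F (w + t *s y) - F w) / t) (\<lambda>w. hderiv F w y) (at 0)"
proof (rule uniform_limitI)
  fix e :: real assume "e > 0"
  show "\<forall>\<^sub>F t in at 0. \<forall>w\<in>ball z (r/2). dist ((F (w + t *s y) - F w) / t) (hderiv F w y) < e"
    using eventually_conj[OF eventually_at_zero_norm_mult_less[OF \<open>e > 0\<close>, of "K * (norm y)\<^sup>2"]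
        eventually_at_zero_norm_mult_less[OF r(1), of "norm y"]]
  proof (rule eventually_mono, intro ballI)
    fix t w assume t: "(t \<noteq> 0 \<and> cmod t * (K * (norm y)\<^sup>2) < e) \<and> t \<noteq> 0 \<and> cmod t * norm y < r"
      and w: "w \<in> ball z (r/2)"
    have w_ball: "w \<in> ball z r" using w subset_ball[of "r/2" r z] r(1) by auto
    have "cmod ((F (w + t *s y) - F w) / t - hderiv F w y) \<le> K * cmod t * (norm y)\<^sup>2"
    proof (rule holo_on_difference_quotient_error[OF hol])
      show "w \<in> V" using w_ball r(2) by auto
      show "cmod (F (w + t *s y) - F w - hderiv F w (t *s y)) \<le> K * (norm (t *s y))\<^sup>2"
        using w_ball t by (intro rem) (auto simp: norm_vector_smult)
    qed (use t in auto)
    then show "dist ((F (w + t *s y) - F w) / t) (hderiv F w y) < e"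
      using t by (simp add: dist_norm mult.assoc mult.left_commute)
  qed
qed

lemma holo_on_deriv_continuous_on:
  assumes hol: "holo_on V F" and V: "open V"
  shows "continuous_on V (\<lambda>z. hderiv F z y)"
proof (rule continuous_at_imp_continuous_on, intro ballI)
  fix z assume "z \<in> V"
  then obtain r K where r: "r > 0" "ball z r \<subseteq> V"
    and rem: "\<And>w y. w \<in> ball z r \<Longrightarrow> norm y \<le> r \<Longrightarrow>
       cmod (F (w + y) - F w - hderiv F w y) \<le> K * (norm y)\<^sup>2"
    using holo_on_quadratic_remainder_locally[OF hol V] by metis
  let ?B = "ball z (r/2)"
  have B_sub: "?B \<subseteq> V" using r subset_ball[of "r/2" r z] by simp
  have "continuous_on ?B (\<lambda>w. hderiv F w y)"
  proof (rule uniform_limit_theorem[where F = "at (0::complex)"])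
    show "uniform_limit ?B (\<lambda>t w. (F (w + t *s y) - F w) / t) (\<lambda>w. hderiv F w y) (at 0)"
      by (rule holo_on_difference_quotient_uniform_limit[OF hol r]) (rule rem)
    have "\<forall>\<^sub>F t in at 0. t \<noteq> 0 \<and> cmod t * norm y < r/2"
      using eventually_at_zero_norm_mult_less[of "r/2" "norm y"] r(1) by simp
    then show "\<forall>\<^sub>F t in at 0. continuous_on ?B (\<lambda>w. (F (w + t *s y) - F w) / t)"
    proof (rule eventually_mono)
      fix t assume t: "t \<noteq> 0 \<and> cmod t * norm y < r/2"
      have "w + t *s y \<in> V" if "w \<in> ?B" for w
        using that t r(2) dist_triangle_half_r[of w z r "w + t *s y"]
        by (auto simp: dist_norm norm_vector_smult norm_minus_commute)
      then have "continuous_on ?B (\<lambda>w. F (w + t *s y))"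
        by (intro continuous_on_compose2[OF holo_on_imp_continuous_on[OF hol]] continuous_intros)
          auto
      moreover have "continuous_on ?B F"
        using continuous_on_subset[OF holo_on_imp_continuous_on[OF hol] B_sub] .
      ultimately show "continuous_on ?B (\<lambda>w. (F (w + t *s y) - F w) / t)"
        using t by (intro continuous_intros) auto
    qed
  qed simp
  then show "isCont (\<lambda>w. hderiv F w y) z"
    using r(1) by (simp add: continuous_on_eq_continuous_at)
qed

lemma holo_on_deriv_Cauchy:
  assumes hol: "holo_on V F" and \<rho>: "\<rho> > 0"
    and inV: "\<And>\<tau>. cmod \<tau> \<le> \<rho> \<Longrightarrow> z + \<tau> *s v \<in> V"
  shows "((\<lambda>\<tau>. F (z + \<tau> *s v) / \<tau>\<^sup>2) has_contour_integral 2 * pi * \<i> * hderiv F z v)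
           (circlepath 0 \<rho>)"
proof -
  let ?f = "\<lambda>\<tau>. F (z + \<tau> *s v)"
  have hol_f: "?f holomorphic_on cball 0 \<rho>"
    using inV by (intro holomorphic_on_line[OF hol]) auto
  have "(0::complex) \<in> ball 0 \<rho>" using \<rho> by simp
  note Cauchy = Cauchy_derivative_integral_circlepath[OF holomorphic_on_imp_continuous_on[OF hol_f]
      holomorphic_on_subset[OF hol_f ball_subset_cball] this]
  have "(?f has_field_derivative hderiv F z v) (at 0)"
    using holo_on_has_field_derivative_line[OF hol, of z 0 v] inV[of 0] \<rho> by simp
  from DERIV_unique[OF this Cauchy(2)]
  have "contour_integral (circlepath 0 \<rho>) (\<lambda>\<tau>. ?f \<tau> / \<tau>\<^sup>2) = 2 * pi * \<i> * hderiv F z v"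
    by (simp add: field_simps)
  then show ?thesis
    using has_contour_integral_integral[OF Cauchy(1)] by simp
qed

lemma bounded_linear_contour_integral:
  fixes \<Phi> :: "complex \<Rightarrow> complex ^ 'm \<Rightarrow> complex"
  assumes lin: "\<And>\<tau>. \<tau> \<in> path_image \<gamma> \<Longrightarrow> linear (\<Phi> \<tau>)"
    and int: "\<And>y. (\<lambda>\<tau>. \<Phi> \<tau> y) contour_integrable_on \<gamma>"
  shows "bounded_linear (\<lambda>y. contour_integral \<gamma> (\<lambda>\<tau>. \<Phi> \<tau> y))"
proof -
  have "linear (\<lambda>y. contour_integral \<gamma> (\<lambda>\<tau>. \<Phi> \<tau> y))"
  proof (rule linearI)
    fix y1 y2 :: "complex ^ 'm"
    have "contour_integral \<gamma> (\<lambda>\<tau>. \<Phi> \<tau> (y1 + y2)) = contour_integral \<gamma> (\<lambda>\<tau>. \<Phi> \<tau> y1 + \<Phi> \<tau> y2)"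
      using lin by (intro contour_integral_eq) (simp add: linear_add)
    then show "contour_integral \<gamma> (\<lambda>\<tau>. \<Phi> \<tau> (y1 + y2))
        = contour_integral \<gamma> (\<lambda>\<tau>. \<Phi> \<tau> y1) + contour_integral \<gamma> (\<lambda>\<tau>. \<Phi> \<tau> y2)"
      using contour_integral_add[OF int int] by simp
  next
    fix c :: real and y :: "complex ^ 'm"
    have "contour_integral \<gamma> (\<lambda>\<tau>. \<Phi> \<tau> (c *\<^sub>R y)) = contour_integral \<gamma> (\<lambda>\<tau>. of_real c * \<Phi> \<tau> y)"
      using lin by (intro contour_integral_eq) (metis linear_scale scaleR_conv_of_real)
    then show "contour_integral \<gamma> (\<lambda>\<tau>. \<Phi> \<tau> (c *\<^sub>R y)) = c *\<^sub>R contour_integral \<gamma> (\<lambda>\<tau>. \<Phi> \<tau> y)"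
      using contour_integral_lmul[OF int] by (simp add: scaleR_conv_of_real)
  qed
  then show ?thesis using linear_conv_bounded_linear by blast
qed

lemma holo_on_deriv_Cauchy_remainder:
  assumes hol: "holo_on V F" and \<rho>: "\<rho> > 0"
    and inV: "\<And>\<tau>. cmod \<tau> \<le> \<rho> \<Longrightarrow> z + \<tau> *s v \<in> V \<and> z + y + \<tau> *s v \<in> V"
    and rem: "\<And>\<tau>. cmod \<tau> = \<rho> \<Longrightarrow>
       cmod (F (z + \<tau> *s v + y) - F (z + \<tau> *s v) - hderiv F (z + \<tau> *s v) y) \<le> R"
    and I: "((\<lambda>\<tau>. hderiv F (z + \<tau> *s v) y / \<tau>\<^sup>2) has_contour_integral I) (circlepath 0 \<rho>)"
  shows "cmod (hderiv F (z + y) v - hderiv F z v - I / (2 * pi * \<i>)) \<le> R / \<rho>"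
proof -
  let ?D = "hderiv F (z + y) v - hderiv F z v - I / (2 * pi * \<i>)"
  have "((\<lambda>\<tau>. F (z + y + \<tau> *s v) / \<tau>\<^sup>2 - F (z + \<tau> *s v) / \<tau>\<^sup>2 - hderiv F (z + \<tau> *s v) y / \<tau>\<^sup>2)
      has_contour_integral 2 * pi * \<i> * ?D) (circlepath 0 \<rho>)"
    using has_contour_integral_diff[OF has_contour_integral_diff[OF
        holo_on_deriv_Cauchy[OF hol \<rho>, of "z + y" v] holo_on_deriv_Cauchy[OF hol \<rho>, of z v]] I]
      inV by (simp add: algebra_simps)
  then have "norm (2 * pi * \<i> * ?D) \<le> R / \<rho>\<^sup>2 * (2 * pi * \<rho>)"
  proof (rule has_contour_integral_bound_circlepath)
    have "0 \<le> R"
      using order_trans[OF norm_ge_zero rem[of "of_real \<rho>"]] \<rho> by simp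
    then show "0 \<le> R / \<rho>\<^sup>2" by simp
    fix \<tau> :: complex assume \<tau>: "norm (\<tau> - 0) = \<rho>"
    have "F (z + y + \<tau> *s v) / \<tau>\<^sup>2 - F (z + \<tau> *s v) / \<tau>\<^sup>2 - hderiv F (z + \<tau> *s v) y / \<tau>\<^sup>2
        = (F (z + \<tau> *s v + y) - F (z + \<tau> *s v) - hderiv F (z + \<tau> *s v) y) / \<tau>\<^sup>2"
      by (simp add: diff_divide_distrib add_ac)
    then show "norm (F (z + y + \<tau> *s v) / \<tau>\<^sup>2 - F (z + \<tau> *s v) / \<tau>\<^sup>2
        - hderiv F (z + \<tau> *s v) y / \<tau>\<^sup>2) \<le> R / \<rho>\<^sup>2"
      using rem[of \<tau>] \<tau> by (simp add: norm_divide norm_power divide_right_mono)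
  qed (use \<rho> in auto)
  moreover have "R / \<rho>\<^sup>2 * (2 * pi * \<rho>) = (2 * pi) * (R / \<rho>)"
    using \<rho> by (simp add: power2_eq_square)
  moreover have "norm (2 * pi * \<i> * ?D) = (2 * pi) * cmod ?D"
    by (simp add: norm_mult)
  ultimately show ?thesis
    using mult_le_cancel_left_pos[of "2 * pi" "cmod ?D" "R / \<rho>"] by simp
qed

lemma translate_in_ball:
  fixes y v :: "complex ^ 'm"
  assumes "r > 0" "norm y < r/2" "cmod \<tau> \<le> r / (2 * (norm v + 1))"
  shows "z + y + \<tau> *s v \<in> ball z r"
proof -
  have denom: "2 * (norm v + 1) > 0" by (smt (verit) norm_ge_zero)
  have "norm (\<tau> *s v) \<le> r / (2 * (norm v + 1)) * norm v"
    unfolding norm_vector_smult by (rule mult_right_mono[OF assms(3) norm_ge_zero])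
  also have "\<dots> < r/2"
    using assms(1) denom by (simp add: pos_divide_less_eq algebra_simps)
  finally have "norm (y + \<tau> *s v) < r"
    using assms(2) norm_triangle_lt[of y "\<tau> *s v" r] by simp
  then show ?thesis
    by (simp add: dist_norm) (metis minus_add_distrib norm_minus_cancel diff_conv_add_uminus)
qed

lemma holo_on_deriv_circle_integral:
  assumes hol: "holo_on V F" and V: "open V" and \<rho>: "\<rho> > 0"
    and inV: "\<And>\<tau>. cmod \<tau> \<le> \<rho> \<Longrightarrow> z + \<tau> *s v \<in> V"
  defines "\<Phi> \<equiv> \<lambda>\<tau> y. hderiv F (z + \<tau> *s v) y / \<tau>\<^sup>2"
  shows "(\<lambda>\<tau>. \<Phi> \<tau> y) contour_integrable_on circlepath 0 \<rho>"
    and "bounded_linear (\<lambda>y. contour_integral (circlepath 0 \<rho>) (\<lambda>\<tau>. \<Phi> \<tau> y))"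
    and "contour_integral (circlepath 0 \<rho>) (\<lambda>\<tau>. \<Phi> \<tau> (c *s y))
           = c * contour_integral (circlepath 0 \<rho>) (\<lambda>\<tau>. \<Phi> \<tau> y)"
proof -
  let ?\<gamma> = "circlepath (0::complex) \<rho>"
  have on_circle: "z + \<tau> *s v \<in> V" if "\<tau> \<in> path_image ?\<gamma>" for \<tau>
    using that \<rho> inV by (simp add: path_image_circlepath_nonneg)
  show int: "(\<lambda>\<tau>. \<Phi> \<tau> y) contour_integrable_on ?\<gamma>" for y
  proof (rule contour_integrable_continuous_circlepath)
    have "continuous_on (path_image ?\<gamma>) (\<lambda>\<tau>. hderiv F (z + \<tau> *s v) y)"
      using on_circle linear_continuous_on[OF bounded_linear_vector_smult_left]
      by (intro continuous_on_compose2[OF holo_on_deriv_continuous_on[OF hol V]] continuous_intros)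
        auto
    then show "continuous_on (path_image ?\<gamma>) (\<lambda>\<tau>. \<Phi> \<tau> y)"
      unfolding \<Phi>_def using \<rho> by (intro continuous_intros) (auto simp: path_image_circlepath_nonneg)
  qed
  show "bounded_linear (\<lambda>y. contour_integral ?\<gamma> (\<lambda>\<tau>. \<Phi> \<tau> y))"
  proof (rule bounded_linear_contour_integral[OF _ int])
    fix \<tau> assume "\<tau> \<in> path_image ?\<gamma>"
    from linear_compose[OF holo_on_linear_deriv[OF hol on_circle[OF this]]
        bounded_linear_divide[THEN bounded_linear.linear]]
    show "linear (\<Phi> \<tau>)" by (simp add: \<Phi>_def o_def)
  qed
  have "contour_integral ?\<gamma> (\<lambda>\<tau>. \<Phi> \<tau> (c *s y)) = contour_integral ?\<gamma> (\<lambda>\<tau>. c * \<Phi> \<tau> y)"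
    using on_circle holo_onD(2)[OF hol] by (intro contour_integral_eq) (simp add: \<Phi>_def)
  then show "contour_integral ?\<gamma> (\<lambda>\<tau>. \<Phi> \<tau> (c *s y)) = c * contour_integral ?\<gamma> (\<lambda>\<tau>. \<Phi> \<tau> y)"
    using contour_integral_lmul[OF int] by simp
qed

lemma holo_on_directional_deriv:
  assumes hol: "holo_on V F" and V: "open V"
  shows "holo_on V (\<lambda>z. hderiv F z v)"
  unfolding holo_on_def
proof
  fix z assume "z \<in> V"
  then obtain r K where r: "r > 0" "ball z r \<subseteq> V"
    and rem: "\<And>w y. w \<in> ball z r \<Longrightarrow> norm y \<le> r \<Longrightarrow>
       cmod (F (w + y) - F w - hderiv F w y) \<le> K * (norm y)\<^sup>2"
    using holo_on_quadratic_remainder_locally[OF hol V] by metis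
  define \<rho> where "\<rho> = r / (2 * (norm v + 1))"
  have \<rho>: "\<rho> > 0" unfolding \<rho>_def using r(1) by (smt (verit) divide_pos_pos norm_ge_zero)
  have near: "z + y + \<tau> *s v \<in> ball z r" if "norm y < r/2" "cmod \<tau> \<le> \<rho>" for y \<tau>
    using translate_in_ball[OF r(1) that[unfolded \<rho>_def]] .
  have circle_in: "z + \<tau> *s v \<in> V" if "cmod \<tau> \<le> \<rho>" for \<tau>
    using near[of 0 \<tau>] that r by auto
  note circle_integral = holo_on_deriv_circle_integral[OF hol V \<rho> circle_in]
  \<comment> \<open>Cauchy's formula for \<open>hderiv F z v\<close>, differentiated in \<open>z\<close> under the integral sign.\<close>
  define \<Lambda> where "\<Lambda> y = contour_integral (circlepath 0 \<rho>)
      (\<lambda>\<tau>. hderiv F (z + \<tau> *s v) y / \<tau>\<^sup>2) / (2 * pi * \<i>)" for y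
  have "((\<lambda>z. hderiv F z v) has_derivative \<Lambda>) (at z)"
  proof (rule has_derivative_quadratic_remainder[where C = "K / \<rho>"])
    show "bounded_linear \<Lambda>"
      unfolding \<Lambda>_def by (rule bounded_linear_compose[OF bounded_linear_divide circle_integral(2)])
    show "0 < r/2" using r by simp
    fix y :: "complex ^ 'a" assume y: "norm y < r/2"
    have "cmod (hderiv F (z + y) v - hderiv F z v - \<Lambda> y) \<le> K * (norm y)\<^sup>2 / \<rho>"
      unfolding \<Lambda>_def
    proof (rule holo_on_deriv_Cauchy_remainder[OF hol \<rho>])
      show "z + \<tau> *s v \<in> V \<and> z + y + \<tau> *s v \<in> V" if "cmod \<tau> \<le> \<rho>" for \<tau>
        using circle_in[OF that] near[OF y that] r by auto
      show "cmod (F (z + \<tau> *s v + y) - F (z + \<tau> *s v) - hderiv F (z + \<tau> *s v) y)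
          \<le> K * (norm y)\<^sup>2" if "cmod \<tau> = \<rho>" for \<tau>
        using near[of 0 \<tau>] that y r by (intro rem) auto
    qed (rule has_contour_integral_integral[OF circle_integral(1)])
    then show "cmod (hderiv F (z + y) v - hderiv F z v - \<Lambda> y) \<le> K / \<rho> * (norm y)\<^sup>2"
      by simp
  qed
  moreover have "\<Lambda> (c *s y) = c * \<Lambda> y" for c y
    using circle_integral(3)[of c y] by (simp add: \<Lambda>_def)
  ultimately show "\<exists>L. ((\<lambda>z. hderiv F z v) has_derivative L) (at z) \<and> (\<forall>c v. L (c *s v) = c * L v)"
    by blast
qed

section \<open>Comparing the fiber norm with fiber derivatives\<close>

lemma tendsto_sum_list:
  fixes f :: "'a \<Rightarrow> 'b \<Rightarrow> 'c::topological_monoid_add"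
  assumes "\<And>x. x \<in> set xs \<Longrightarrow> ((\<lambda>t. f x t) \<longlongrightarrow> l x) net"
  shows "((\<lambda>t. \<Sum>x\<leftarrow>xs. f x t) \<longlongrightarrow> (\<Sum>x\<leftarrow>xs. l x)) net"
  using assms by (induction xs) (auto intro!: tendsto_add)

lemma sum_list_sqrt_bounds:
  fixes a :: "'a \<Rightarrow> real"
  assumes nonneg: "\<And>x. x \<in> set xs \<Longrightarrow> a x \<ge> 0"
  shows "sqrt (\<Sum>x\<leftarrow>xs. (a x)\<^sup>2) \<le> (\<Sum>x\<leftarrow>xs. a x)"
    and "(\<Sum>x\<leftarrow>xs. a x) \<le> sqrt (length xs) * sqrt (\<Sum>x\<leftarrow>xs. (a x)\<^sup>2)"
proof -
  let ?f = "\<lambda>i. a (xs ! i)" and ?I = "{..<length xs}"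
  have sum_eq: "(\<Sum>x\<leftarrow>xs. g x) = (\<Sum>i\<in>?I. g (xs ! i))" for g :: "'a \<Rightarrow> real"
    by (simp add: sum_list_sum_nth atLeast0LessThan)
  have L2_eq: "sqrt (\<Sum>x\<leftarrow>xs. (a x)\<^sup>2) = L2_set ?f ?I"
    by (simp add: sum_eq L2_set_def)
  show "sqrt (\<Sum>x\<leftarrow>xs. (a x)\<^sup>2) \<le> (\<Sum>x\<leftarrow>xs. a x)"
    unfolding L2_eq sum_eq[of a] using nonneg by (intro L2_set_le_sum) simp
  have "(\<Sum>i\<in>?I. \<bar>?f i\<bar> * \<bar>1\<bar>) \<le> L2_set ?f ?I * L2_set (\<lambda>_. 1) ?I"
    by (rule L2_set_mult_ineq)
  then show "(\<Sum>x\<leftarrow>xs. a x) \<le> sqrt (length xs) * sqrt (\<Sum>x\<leftarrow>xs. (a x)\<^sup>2)"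
    unfolding L2_eq sum_eq[of a] L2_set_constant using nonneg by (simp add: mult.commute)
qed

lemma eventually_line_in_open:
  assumes "open V" "w \<in> V"
  shows "\<forall>\<^sub>F t in at (0::complex). w + t *s u \<in> V"
proof -
  have "isCont (\<lambda>t. w + t *s u) 0"
    by (intro continuous_intros linear_continuous_at bounded_linear_vector_smult_left)
  then show ?thesis
    using assms by (auto simp: isCont_def intro: topological_tendstoD)
qed

lemma holo_on_vanishing_quotient_tendsto:
  assumes hol: "\<And>F. F \<in> set fs \<Longrightarrow> holo_on V F" and "w \<in> V"
    and vanish: "\<And>F. F \<in> set fs \<Longrightarrow> F w = 0"
  shows "((\<lambda>t. \<Sum>F\<leftarrow>fs. (cmod (F (w + t *s u) / t))\<^sup>2)
           \<longlongrightarrow> (\<Sum>F\<leftarrow>fs. (cmod (hderiv F w u))\<^sup>2)) (at 0)"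
proof (intro tendsto_sum_list tendsto_power tendsto_norm)
  fix F assume F: "F \<in> set fs"
  then show "((\<lambda>t. F (w + t *s u) / t) \<longlongrightarrow> hderiv F w u) (at 0)"
    using holo_on_has_field_derivative_line[OF hol[OF F], of w 0 u] \<open>w \<in> V\<close> vanish[OF F]
    by (simp add: has_field_derivative_iff)
qed

lemma fiber_derivative_comparison:
  fixes fs :: "(complex ^ 'm \<Rightarrow> complex) list"
  assumes hol: "\<And>F. F \<in> set fs \<Longrightarrow> holo_on V F" and V: "open V" "w \<in> V"
    and b: "\<And>z. z \<in> V \<Longrightarrow> \<bar>b z\<bar> \<le> B"
    and hom: "\<And>t. w + t *s u \<in> V \<Longrightarrow>
       (cmod t)\<^sup>2 * q = exp (b (w + t *s u)) * (\<Sum>F\<leftarrow>fs. (cmod (F (w + t *s u)))\<^sup>2)"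
  shows "q \<le> exp B * (\<Sum>F\<leftarrow>fs. (cmod (hderiv F w u))\<^sup>2)"
    and "(\<Sum>F\<leftarrow>fs. (cmod (hderiv F w u))\<^sup>2) \<le> exp B * q"
proof -
  define Q where "Q = (\<lambda>t. \<Sum>F\<leftarrow>fs. (cmod (F (w + t *s u) / t))\<^sup>2)"
  define L where "L = (\<Sum>F\<leftarrow>fs. (cmod (hderiv F w u))\<^sup>2)"
  have "(\<Sum>F\<leftarrow>fs. (cmod (F w))\<^sup>2) = 0"
    using hom[of 0] V by simp
  then have vanish: "F w = 0" if "F \<in> set fs" for F
    using that by (subst (asm) sum_list_nonneg_eq_0_iff) auto
  have lim: "(Q \<longlongrightarrow> L) (at 0)"
    unfolding Q_def L_def
    by (rule holo_on_vanishing_quotient_tendsto) (use hol V(2) vanish in auto)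
  have bounds: "\<forall>\<^sub>F t in at 0. exp (- B) * q \<le> Q t \<and> Q t \<le> exp B * q"
    using eventually_line_in_open[OF V, of u] eventually_neq_at_within[of 0 0 UNIV]
  proof (eventually_elim)
    case (elim t)
    have "(cmod t)\<^sup>2 * Q t = (\<Sum>F\<leftarrow>fs. (cmod t)\<^sup>2 * (cmod (F (w + t *s u) / t))\<^sup>2)"
      unfolding Q_def by (rule sum_list_const_mult[symmetric])
    also have "\<dots> = (\<Sum>F\<leftarrow>fs. (cmod (F (w + t *s u)))\<^sup>2)"
      using elim(2) by (simp add: norm_divide power_divide)
    finally have "(cmod t)\<^sup>2 * q = exp (b (w + t *s u)) * ((cmod t)\<^sup>2 * Q t)"
      using hom[OF elim(1)] by simp
    then have Q_eq: "Q t = exp (- b (w + t *s u)) * q"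
      using elim(2) by (simp add: exp_minus field_simps)
    have "0 \<le> Q t" unfolding Q_def by (intro sum_list_nonneg) auto
    then have "0 \<le> q" using Q_eq by (simp add: zero_le_mult_iff)
    moreover have "exp (- B) \<le> exp (- b (w + t *s u))" "exp (- b (w + t *s u)) \<le> exp B"
      using b[OF elim(1)] by auto
    ultimately show ?case
      unfolding Q_eq by (auto intro: mult_right_mono)
  qed
  have "exp (- B) * q \<le> L"
    by (rule tendsto_le[OF _ lim tendsto_const]) (use bounds in \<open>auto elim: eventually_mono\<close>)
  moreover have "L \<le> exp B * q"
    by (rule tendsto_le[OF _ tendsto_const lim]) (use bounds in \<open>auto elim: eventually_mono\<close>)
  ultimately show "q \<le> exp B * L" "L \<le> exp B * q"
    by (simp_all add: exp_minus field_simps)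
qed

lemma fiber_derivative_norm_equivalence:
  fixes fs :: "(complex ^ 'm \<Rightarrow> complex) list"
  assumes hol: "\<And>F. F \<in> set fs \<Longrightarrow> holo_on V F" and V: "open V" "w \<in> V"
    and b: "\<And>z. z \<in> V \<Longrightarrow> \<bar>b z\<bar> \<le> B"
    and hom: "\<And>t. w + t *s u \<in> V \<Longrightarrow>
       (cmod t)\<^sup>2 * q = exp (b (w + t *s u)) * (\<Sum>F\<leftarrow>fs. (cmod (F (w + t *s u)))\<^sup>2)"
  shows "sqrt q \<le> (sqrt (length fs) + 1) * sqrt (exp B) * (\<Sum>F\<leftarrow>fs. cmod (hderiv F w u))"
    and "(\<Sum>F\<leftarrow>fs. cmod (hderiv F w u)) \<le> (sqrt (length fs) + 1) * sqrt (exp B) * sqrt q"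
proof -
  let ?T = "\<Sum>F\<leftarrow>fs. cmod (hderiv F w u)" and ?S = "\<Sum>F\<leftarrow>fs. (cmod (hderiv F w u))\<^sup>2"
  let ?n = "sqrt (length fs)"
  have comparison: "q \<le> exp B * ?S" "?S \<le> exp B * q"
    using fiber_derivative_comparison[OF hol V b hom] by simp_all
  note l1_l2 = sum_list_sqrt_bounds[of fs "\<lambda>F. cmod (hderiv F w u)", simplified]
  have T: "0 \<le> ?T" by (intro sum_list_nonneg) auto
  have "0 \<le> ?S" by (intro sum_list_nonneg) auto
  then have "0 \<le> exp B * q" using comparison(2) by linarith
  then have q: "0 \<le> q" by (simp add: zero_le_mult_iff)
  have "sqrt q \<le> sqrt (exp B) * sqrt ?S"
    using real_sqrt_le_mono[OF comparison(1)] by (simp add: real_sqrt_mult)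
  also have "\<dots> \<le> sqrt (exp B) * ?T"
    using l1_l2(1) by (intro mult_left_mono) auto
  also have "\<dots> \<le> (?n + 1) * sqrt (exp B) * ?T"
    using T by (intro mult_right_mono) auto
  finally show "sqrt q \<le> (?n + 1) * sqrt (exp B) * ?T" .
  have "?T \<le> ?n * sqrt ?S" by (rule l1_l2(2))
  also have "\<dots> \<le> ?n * (sqrt (exp B) * sqrt q)"
    using real_sqrt_le_mono[OF comparison(2)] by (intro mult_left_mono) (simp_all add: real_sqrt_mult)
  also have "\<dots> \<le> (?n + 1) * sqrt (exp B) * sqrt q"
    using q by (simp add: algebra_simps)
  finally show "?T \<le> (?n + 1) * sqrt (exp B) * sqrt q" .
qed

section \<open>The trivial bundle\<close>

lemma basept_joinv [simp]: "basept (joinv x a) = x"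
  by (simp add: basept_def joinv_def vec_eq_iff)

lemma fibpt_joinv [simp]: "fibpt (joinv x a) = a"
  by (simp add: fibpt_def joinv_def vec_eq_iff)

lemma joinv_add_smult: "joinv x (t *s a) = joinv x 0 + t *s joinv 0 a"
  by (simp add: joinv_def vec_eq_iff split: sum.splits)

lemma joinv_zero_smult:
  "joinv (c *s x) (0 :: complex ^ 'r::finite) = c *s joinv (x :: complex ^ 'n::finite) 0"
  by (simp add: joinv_def vec_eq_iff split: sum.splits)

lemma bounded_linear_joinv_zero:
  "bounded_linear (\<lambda>x :: complex ^ 'n::finite. joinv x (0 :: complex ^ 'r::finite))"
proof -
  have "linear (\<lambda>x :: complex ^ 'n. joinv x (0 :: complex ^ 'r))"
    by (rule linearI) (simp_all add: joinv_def vec_eq_iff split: sum.splits)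
  then show ?thesis using linear_conv_bounded_linear by blast
qed

lemma joinv_zero_eq_sum_axis:
  "joinv (0 :: complex ^ 'n::finite) (a :: complex ^ 'r::finite)
     = (\<Sum>j\<in>UNIV. a $ j *s joinv 0 (axis j 1))"
proof -
  have "(\<Sum>j\<in>UNIV. a $ j * axis j (1::complex) $ k) = a $ k" for k
    by (simp add: axis_def if_distrib sum.delta cong: if_cong)
  then show ?thesis
    by (simp add: vec_eq_iff joinv_def sum_component split: sum.splits)
qed

lemma clinear_joinv_fiber_eq_cdot:
  fixes L :: "complex ^ ('n::finite + 'r::finite) \<Rightarrow> complex"
  assumes "linear L" "\<And>c v. L (c *s v) = c * L v"
  shows "L (joinv 0 \<alpha>) = cdot (\<chi> j. L (joinv 0 (axis j 1))) \<alpha>"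
proof -
  have "L (joinv 0 \<alpha>) = (\<Sum>j\<in>UNIV. L (\<alpha> $ j *s joinv 0 (axis j 1)))"
    unfolding joinv_zero_eq_sum_axis[of \<alpha>] by (rule linear_sum[OF assms(1)])
  then show ?thesis using assms(2) by (simp add: cdot_def mult.commute)
qed

lemma herm_psd_hnorm2_nonneg: "herm_psd A \<Longrightarrow> 0 \<le> hnorm2 A a"
  unfolding herm_psd_def hnorm2_def by blast

lemma hnorm2_smult: "hnorm2 A (t *s a) = (cmod t)\<^sup>2 * hnorm2 A a"
proof -
  have "(\<Sum>j\<in>UNIV. \<Sum>k\<in>UNIV. cnj ((t *s a) $ j) * A $ j $ k * (t *s a) $ k)
      = (t * cnj t) * (\<Sum>j\<in>UNIV. \<Sum>k\<in>UNIV. cnj (a $ j) * A $ j $ k * a $ k)"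
    by (simp add: sum_distrib_left algebra_simps)
  then show ?thesis
    unfolding hnorm2_def complex_norm_square[symmetric] by simp
qed

lemma elog_eq_add_imp_eq_exp:
  assumes eq: "elog q = elog s + ereal b" and "q \<ge> 0" "s \<ge> 0"
  shows "q = exp b * s"
proof (cases "q = 0 \<or> s = 0")
  case True
  then show ?thesis using eq by (auto simp: elog_def split: if_splits)
next
  case False
  then have "ln q = ln s + b" using eq by (simp add: elog_def)
  then show ?thesis
    using False assms(2,3) by (metis exp_add exp_ln less_eq_real_def mult.commute)
qed

definition fiber_differential ::
    "(complex ^ ('n::finite + 'r::finite) \<Rightarrow> complex) \<Rightarrow> complex ^ 'n \<Rightarrow> complex ^ 'r"
  where "fiber_differential F x = (\<chi> j. hderiv F (joinv x 0) (joinv 0 (axis j 1)))"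

lemma holo_on_fiber_differential:
  assumes "holo_on V F" "open V"
  shows "holo_on {x. joinv x 0 \<in> V} (\<lambda>x. fiber_differential F x $ j)"
proof -
  have "holo_on {x. joinv x 0 \<in> V} (\<lambda>x. hderiv F (joinv x 0) (joinv 0 (axis j 1)))"
    by (rule holo_on_compose_clinear[OF holo_on_directional_deriv[OF assms]
          bounded_linear_joinv_zero joinv_zero_smult])
  then show ?thesis by (simp add: fiber_differential_def)
qed

lemma cdot_fiber_differential:
  assumes "holo_on V F" "joinv x 0 \<in> V"
  shows "cdot (fiber_differential F x) \<alpha> = hderiv F (joinv x 0) (joinv 0 \<alpha>)"
  unfolding fiber_differential_def
  by (rule clinear_joinv_fiber_eq_cdot[OF holo_on_linear_deriv[OF assms] holo_onD(2)[OF assms],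
        symmetric])

lemma fiber_differential_norm_equivalence:
  fixes fs :: "(complex ^ ('n::finite + 'r::finite) \<Rightarrow> complex) list"
    and H :: "complex ^ 'n \<Rightarrow> complex ^ 'r ^ 'r"
  assumes hol: "\<forall>F\<in>set fs. holo_on V F" and V: "open V" "joinv x 0 \<in> V"
    and b: "\<And>z. z \<in> V \<Longrightarrow> \<bar>b z\<bar> \<le> B"
    and fiber: "\<And>a. joinv x a \<in> V \<Longrightarrow>
       hnorm2 (H x) a = exp (b (joinv x a)) * (\<Sum>F\<leftarrow>fs. (cmod (F (joinv x a)))\<^sup>2)"
  shows "sqrt (hnorm2 (H x) \<alpha>)
           \<le> (sqrt (length fs) + 1) * sqrt (exp B) * (\<Sum>F\<leftarrow>fs. cmod (cdot (fiber_differential F x) \<alpha>))"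
    and "(\<Sum>F\<leftarrow>fs. cmod (cdot (fiber_differential F x) \<alpha>))
           \<le> (sqrt (length fs) + 1) * sqrt (exp B) * sqrt (hnorm2 (H x) \<alpha>)"
proof -
  have "(\<Sum>F\<leftarrow>fs. cmod (cdot (fiber_differential F x) \<alpha>))
      = (\<Sum>F\<leftarrow>fs. cmod (hderiv F (joinv x 0) (joinv 0 \<alpha>)))"
    using hol cdot_fiber_differential[OF _ V(2)]
    by (intro arg_cong[where f = sum_list] map_cong) auto
  moreover have "(cmod t)\<^sup>2 * hnorm2 (H x) \<alpha> = exp (b (joinv x 0 + t *s joinv 0 \<alpha>))
      * (\<Sum>F\<leftarrow>fs. (cmod (F (joinv x 0 + t *s joinv 0 \<alpha>)))\<^sup>2)"
    if "joinv x 0 + t *s joinv 0 \<alpha> \<in> V" for t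
    using fiber[of "t *s \<alpha>"] that by (simp add: joinv_add_smult hnorm2_smult)
  ultimately show "sqrt (hnorm2 (H x) \<alpha>)
      \<le> (sqrt (length fs) + 1) * sqrt (exp B) * (\<Sum>F\<leftarrow>fs. cmod (cdot (fiber_differential F x) \<alpha>))"
    and "(\<Sum>F\<leftarrow>fs. cmod (cdot (fiber_differential F x) \<alpha>))
      \<le> (sqrt (length fs) + 1) * sqrt (exp B) * sqrt (hnorm2 (H x) \<alpha>)"
    using fiber_derivative_norm_equivalence[of fs V "joinv x 0" b B "joinv 0 \<alpha>" "hnorm2 (H x) \<alpha>"]
      hol V b by simp_all
qed

lemma qas_hermitian_local_form:
  fixes H :: "complex ^ 'n::finite \<Rightarrow> complex ^ 'r::finite ^ 'r"
  assumes herm: "\<forall>x\<in>\<Omega>. herm_psd (H x)"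
    and qas: "qas_on (total_space \<Omega> :: (complex ^ ('n + 'r)) set)
                (\<lambda>w. elog (hnorm2 (H (basept w)) (fibpt w)))"
    and p: "p \<in> total_space \<Omega>"
  obtains V fs b B where "open V" "p \<in> V" "V \<subseteq> total_space \<Omega>" "\<forall>F\<in>set fs. holo_on V F"
    "\<And>z. z \<in> V \<Longrightarrow> \<bar>b z\<bar> \<le> B"
    "\<And>x a. joinv x a \<in> V \<Longrightarrow>
       hnorm2 (H x) a = exp (b (joinv x a)) * (\<Sum>F\<leftarrow>fs. (cmod (F (joinv x a)))\<^sup>2)"
proof -
  obtain V fs b where V: "open V" "p \<in> V" "V \<subseteq> total_space \<Omega>"
    and hol: "\<forall>F\<in>set fs. holo_on V F" and "bounded (b ` V)"
    and log_eq: "\<forall>z\<in>V. elog (hnorm2 (H (basept z)) (fibpt z))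
                        = elog (\<Sum>F\<leftarrow>fs. (cmod (F z))\<^sup>2) + ereal (b z)"
    using qas p unfolding qas_on_def by blast
  obtain B where B: "\<And>z. z \<in> V \<Longrightarrow> \<bar>b z\<bar> \<le> B"
    using \<open>bounded (b ` V)\<close> unfolding bounded_iff by fastforce
  have fiber: "hnorm2 (H x) a = exp (b (joinv x a)) * (\<Sum>F\<leftarrow>fs. (cmod (F (joinv x a)))\<^sup>2)"
    if "joinv x a \<in> V" for x a
    using that V(3) herm log_eq
    by (intro elog_eq_add_imp_eq_exp)
      (auto simp: total_space_def herm_psd_hnorm2_nonneg intro!: sum_list_nonneg)
  show thesis using that[of V fs b B] V hol B fiber by blast
qed

theorem lemma3p7:
  fixes \<Omega> :: "(complex ^ 'n) set"
    and H :: "complex ^ 'n \<Rightarrow> complex ^ 'r ^ 'r"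
    and x0 :: "complex ^ 'n"
  assumes "open \<Omega>" and "x0 \<in> \<Omega>"
    and "\<forall>x\<in>\<Omega>. herm_psd (H x)"
    and "qas_on (total_space \<Omega> :: (complex ^ ('n + 'r)) set)
           (\<lambda>w. elog (hnorm2 (H (basept w)) (fibpt w)))"
  shows "\<exists>U G fs C. open U \<and> x0 \<in> U \<and> U \<subseteq> \<Omega> \<and>
     (\<forall>j k. holo_on U (\<lambda>x. G x $ j $ k)) \<and> (\<forall>x\<in>U. invertible (G x)) \<and>
     (\<forall>f\<in>set (fs :: (complex ^ 'n \<Rightarrow> complex ^ 'r) list). \<forall>j. holo_on U (\<lambda>x. f x $ j)) \<and>
     C > (0::real) \<and>
     (\<forall>x\<in>U. \<forall>\<alpha>.
        (1 / C) * sqrt (hnorm2 (H x) (G x *v \<alpha>)) \<le> (\<Sum>f\<leftarrow>fs. cmod (cdot (f x) \<alpha>)) \<and>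
        (\<Sum>f\<leftarrow>fs. cmod (cdot (f x) \<alpha>)) \<le> C * sqrt (hnorm2 (H x) (G x *v \<alpha>)))"
proof -
  have p: "joinv x0 (0 :: complex ^ 'r) \<in> total_space \<Omega>"
    using assms(2) by (simp add: total_space_def)
  obtain V fs b B where V: "open V" "joinv x0 0 \<in> V" "V \<subseteq> total_space \<Omega>"
    and hol: "\<forall>F\<in>set fs. holo_on V F" and b: "\<And>z. z \<in> V \<Longrightarrow> \<bar>b z\<bar> \<le> B"
    and fiber: "\<And>x a. joinv x a \<in> V \<Longrightarrow>
       hnorm2 (H x) a = exp (b (joinv x a)) * (\<Sum>F\<leftarrow>fs. (cmod (F (joinv x a)))\<^sup>2)"
    by (rule qas_hermitian_local_form[OF assms(3,4) p], rule that)
  define U where "U = {x. joinv x (0 :: complex ^ 'r) \<in> V}"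
  define C where "C = (sqrt (length fs) + 1) * sqrt (exp B)"
  have U: "open U" "x0 \<in> U" "U \<subseteq> \<Omega>"
    using open_vimage[OF V(1) linear_continuous_on[OF bounded_linear_joinv_zero]] V(2,3)
    by (auto simp: U_def vimage_def total_space_def)
  have C: "C > 0" unfolding C_def by (simp add: add_nonneg_pos)
  have "\<forall>f\<in>set (map fiber_differential fs). \<forall>j. holo_on U (\<lambda>x. f x $ j)"
    using hol V(1) by (auto simp: U_def intro: holo_on_fiber_differential)
  moreover have "(1 / C) * sqrt (hnorm2 (H x) \<alpha>) \<le> (\<Sum>F\<leftarrow>fs. cmod (cdot (fiber_differential F x) \<alpha>))
      \<and> (\<Sum>F\<leftarrow>fs. cmod (cdot (fiber_differential F x) \<alpha>)) \<le> C * sqrt (hnorm2 (H x) \<alpha>)"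
    if "x \<in> U" for x \<alpha>
    using fiber_differential_norm_equivalence[of fs V x b B H \<alpha>] hol V(1) b fiber that C
    by (simp add: U_def C_def field_simps)
  ultimately show ?thesis
    using U C holo_on_const
    by (intro exI[of _ U] exI[of _ "\<lambda>_. mat 1"] exI[of _ "map fiber_differential fs"] exI[of _ C])
      (auto simp: invertible_def o_def)
qed

end
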